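(* Let $B$ be a Frobenius algebra over $\mathbb{Q}$ and $n\ge0$. Then the algebra $A_n(B)$ is a Frobenius algebra.
   Context: $A_n$ is the nilCoxeter algebra: the unital $\mathbb{Q}$-algebra generated by $Y_1,\dots,Y_{n-1}$ with relations $Y_i^2=0$, $Y_iY_j=Y_jY_i$ for $|i-j|>1$, $Y_iY_{i+1}Y_i=Y_{i+1}Y_iY_{i+1}$; for $w\in S_n$ with reduced expression $w=s_{i_1}\cdots s_{i_r}$, $Y_w=Y_{i_1}\cdots Y_{i_r}$, and $\{Y_w\}_{w\in S_n}$ is a basis of $A_n$. $A_n(B)$ is the semidirect product of $A_n$ and $B^{\otimes n}$: the algebra generated by the subalgebras $A_n$ and $B^{\otimes n}$, with underlying space $A_n\otimes B^{\otimes n}$, subject to $Y_w(b_1\otimes\cdots\otimes b_n)=(b_{w(1)}\otimes\cdots\otimes b_{w(n)})Y_w$ for $w\in S_n$, $b_i\in B$. A Frobenius algebra is a finite-dimensional algebra $C$ with a linear map $\mathrm{tr}:C\to\mathbb{Q}$ such that for every nonzero $y\in C$ there is $y'$ with $\mathrm{tr}(yy')\neq0$. *)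

theory Defs
  imports Complex_Main "HOL-Library.FuncSet" "HOL-Combinatorics.Permutations"
begin

text \<open>A finite-dimensional algebra over the rationals is presented by a finite basis
  index set I and structure constants m: e_i e_j = sum_k m i j k e_k.
  Elements are coefficient vectors supported on I.\<close>

definition vecs :: "'i set \<Rightarrow> ('i \<Rightarrow> rat) set" where
  "vecs I = {x. \<forall>i. i \<notin> I \<longrightarrow> x i = 0}"

definition amult :: "'i set \<Rightarrow> ('i \<Rightarrow> 'i \<Rightarrow> 'i \<Rightarrow> rat) \<Rightarrow> ('i \<Rightarrow> rat) \<Rightarrow> ('i \<Rightarrow> rat) \<Rightarrow> ('i \<Rightarrow> rat)" where
  "amult I m x y = (\<lambda>k. if k \<in> I then (\<Sum>i\<in>I. \<Sum>j\<in>I. x i * y j * m i j k) else 0)"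

definition fd_algebra :: "'i set \<Rightarrow> ('i \<Rightarrow> 'i \<Rightarrow> 'i \<Rightarrow> rat) \<Rightarrow> bool" where
  "fd_algebra I m \<longleftrightarrow> finite I \<and>
     (\<forall>x\<in>vecs I. \<forall>y\<in>vecs I. \<forall>z\<in>vecs I.
        amult I m (amult I m x y) z = amult I m x (amult I m y z)) \<and>
     (\<exists>u\<in>vecs I. \<forall>x\<in>vecs I. amult I m u x = x \<and> amult I m x u = x)"

text \<open>Frobenius algebra: a linear functional tr (written through its values t on the
  basis, tr x = sum_i x i * t i) such that for every nonzero y there is y' with tr(y y') nonzero.\<close>
definition frobenius :: "'i set \<Rightarrow> ('i \<Rightarrow> 'i \<Rightarrow> 'i \<Rightarrow> rat) \<Rightarrow> bool" where
  "frobenius I m \<longleftrightarrow> fd_algebra I m \<and>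
     (\<exists>t::'i \<Rightarrow> rat. \<forall>y\<in>vecs I. y \<noteq> (\<lambda>_. 0) \<longrightarrow>
        (\<exists>y'\<in>vecs I. (\<Sum>k\<in>I. amult I m y y' k * t k) \<noteq> 0))"

definition perm_length :: "nat \<Rightarrow> (nat \<Rightarrow> nat) \<Rightarrow> nat" where
  "perm_length n w = card {(i, j). i < j \<and> j < n \<and> w j < w i}"

text \<open>Basis of A_n(B) = A_n tensor B^{tensor n}: pairs (f, w), standing for
  (e_{f 0} \<otimes> ... \<otimes> e_{f (n-1)}) Y_w, with f a tuple of basis indices of B
  and w a permutation of {0..<n}.\<close>
definition AnB_basis :: "'i set \<Rightarrow> nat \<Rightarrow> ((nat \<Rightarrow> 'i) \<times> (nat \<Rightarrow> nat)) set" where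
  "AnB_basis I n = {(f, w). f \<in> {..<n} \<rightarrow>\<^sub>E I \<and> w permutes {..<n}}"

text \<open>Using Y_w b = (b \<circ> w) Y_w (i.e.
  Y_w (b_1 \<otimes>...\<otimes> b_n) = (b_{w(1)} \<otimes>...\<otimes> b_{w(n)}) Y_w) and
  Y_w Y_v = Y_{v \<circ> w} if the lengths add, 0 otherwise (the composition order is the one
  compatible with the commutation relation), we get
  (e_f Y_w)(e_g Y_v) = e_f e_{g \<circ> w} Y_w Y_v.\<close>
definition AnB_mult :: "'i set \<Rightarrow> ('i \<Rightarrow> 'i \<Rightarrow> 'i \<Rightarrow> rat) \<Rightarrow> nat \<Rightarrow>
    ((nat \<Rightarrow> 'i) \<times> (nat \<Rightarrow> nat)) \<Rightarrow> ((nat \<Rightarrow> 'i) \<times> (nat \<Rightarrow> nat)) \<Rightarrow>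
    ((nat \<Rightarrow> 'i) \<times> (nat \<Rightarrow> nat)) \<Rightarrow> rat" where
  "AnB_mult I m n a b c =
     (let (f, w) = a; (g, v) = b; (h, u) = c in
      if u = v \<circ> w \<and> perm_length n u = perm_length n v + perm_length n w
      then (\<Prod>k<n. m (f k) (g (w k)) (h k)) else 0)"

end

theory Submission
  imports Defs
begin

text \<open>
  Associativity and the unit of
  \<open>A\<^sub>n(B)\<close> reduce to the same identities for \<open>B\<^sup>\<otimes>\<^sup>n\<close>, which hold factorwise, and to the
  fact that additivity of Coxeter lengths in a product \<open>u v w\<close> does not depend on the bracketing.
  As trace take \<open>tr(b Y\<^sub>w) = tr\<^sub>B\<^sup>\<otimes>\<^sup>n(b)\<close> if \<open>w\<close> is the longest permutation \<open>w\<^sub>0\<close>, and \<open>0\<close>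
  otherwise. Since \<open>v \<circ> w = w\<^sub>0\<close> with additive lengths forces \<open>v = w\<^sub>0 \<circ> w\<^sup>-\<^sup>1\<close>, the Gram matrix
  of this trace pairs the block of each \<open>Y\<^sub>w\<close> with a single other block, and the pairing between
  them is a reindexed tensor power of the nondegenerate Gram matrix of \<open>B\<close>.
\<close>

section \<open>Algebras given by structure constants\<close>

definition basis_vec :: "'i \<Rightarrow> 'i \<Rightarrow> rat" where
  "basis_vec a = (\<lambda>i. if i = a then 1 else 0)"

definition assoc_constants :: "'i set \<Rightarrow> ('i \<Rightarrow> 'i \<Rightarrow> 'i \<Rightarrow> rat) \<Rightarrow> bool" where
  "assoc_constants J M \<longleftrightarrow> (\<forall>a\<in>J. \<forall>b\<in>J. \<forall>c\<in>J. \<forall>d\<in>J.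
     (\<Sum>p\<in>J. M a b p * M p c d) = (\<Sum>p\<in>J. M b c p * M a p d))"

definition unit_constants :: "'i set \<Rightarrow> ('i \<Rightarrow> 'i \<Rightarrow> 'i \<Rightarrow> rat) \<Rightarrow> ('i \<Rightarrow> rat) \<Rightarrow> bool" where
  "unit_constants J M u \<longleftrightarrow> (\<forall>j\<in>J. \<forall>k\<in>J.
     (\<Sum>i\<in>J. u i * M i j k) = basis_vec j k \<and> (\<Sum>i\<in>J. u i * M j i k) = basis_vec j k)"

lemma basis_vec_in_vecs: "a \<in> J \<Longrightarrow> basis_vec a \<in> vecs J"
  by (auto simp: basis_vec_def vecs_def)

lemma amult_outside: "k \<notin> J \<Longrightarrow> amult J M x y k = 0"
  by (simp add: amult_def)

lemma sum_basis_vec_mult: "finite J \<Longrightarrow> a \<in> J \<Longrightarrow> (\<Sum>i\<in>J. basis_vec a i * F i) = F a"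
  by (simp add: basis_vec_def if_distrib[of "\<lambda>x. x * _"] cong: if_cong)

lemma amult_eq_sum_left:
  "k \<in> J \<Longrightarrow> amult J M x y k = (\<Sum>i\<in>J. x i * (\<Sum>j\<in>J. y j * M i j k))"
  by (simp add: amult_def sum_distrib_left mult_ac)

lemma amult_eq_sum_right:
  "k \<in> J \<Longrightarrow> amult J M x y k = (\<Sum>j\<in>J. y j * (\<Sum>i\<in>J. x i * M i j k))"
  by (simp add: amult_def sum_distrib_left mult_ac) (rule sum.swap)

lemma amult_basis_vec_left:
  assumes "finite J" "a \<in> J" "k \<in> J"
  shows "amult J M (basis_vec a) y k = (\<Sum>j\<in>J. y j * M a j k)"
  using assms by (simp add: amult_eq_sum_left sum_basis_vec_mult)

lemma amult_basis_vec_right: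
  assumes "finite J" "b \<in> J" "k \<in> J"
  shows "amult J M x (basis_vec b) k = (\<Sum>i\<in>J. x i * M i b k)"
  using assms by (simp add: amult_eq_sum_right sum_basis_vec_mult)

lemma sum_swap_inward:
  "(\<Sum>p\<in>A. \<Sum>a\<in>B. \<Sum>b\<in>C. F p a b) = (\<Sum>a\<in>B. \<Sum>b\<in>C. \<Sum>p\<in>A. F p a b)"
  by (subst sum.swap) (rule sum.cong[OF refl], rule sum.swap)

lemma amult_amult_left:
  assumes "k \<in> J"
  shows "amult J M (amult J M x y) z k
    = (\<Sum>a\<in>J. \<Sum>b\<in>J. \<Sum>c\<in>J. x a * y b * z c * (\<Sum>p\<in>J. M a b p * M p c k))"
proof -
  have "amult J M (amult J M x y) z k
      = (\<Sum>p\<in>J. \<Sum>c\<in>J. \<Sum>a\<in>J. \<Sum>b\<in>J. x a * y b * z c * (M a b p * M p c k))"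
    using assms by (simp add: amult_def sum_distrib_left sum_distrib_right mult_ac)
  also have "\<dots> = (\<Sum>c\<in>J. \<Sum>a\<in>J. \<Sum>b\<in>J. \<Sum>p\<in>J. x a * y b * z c * (M a b p * M p c k))"
    by (rule trans[OF sum.swap], rule sum.cong[OF refl], rule sum_swap_inward)
  also have "\<dots> = (\<Sum>a\<in>J. \<Sum>b\<in>J. \<Sum>c\<in>J. \<Sum>p\<in>J. x a * y b * z c * (M a b p * M p c k))"
    by (rule sum_swap_inward)
  finally show ?thesis by (simp add: sum_distrib_left)
qed

lemma amult_amult_right:
  assumes "k \<in> J"
  shows "amult J M x (amult J M y z) k
    = (\<Sum>a\<in>J. \<Sum>b\<in>J. \<Sum>c\<in>J. x a * y b * z c * (\<Sum>p\<in>J. M b c p * M a p k))"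
proof -
  have "amult J M x (amult J M y z) k
      = (\<Sum>a\<in>J. \<Sum>p\<in>J. \<Sum>b\<in>J. \<Sum>c\<in>J. x a * y b * z c * (M b c p * M a p k))"
    using assms by (simp add: amult_def sum_distrib_left sum_distrib_right mult_ac)
  also have "\<dots> = (\<Sum>a\<in>J. \<Sum>b\<in>J. \<Sum>c\<in>J. \<Sum>p\<in>J. x a * y b * z c * (M b c p * M a p k))"
    by (rule sum.cong[OF refl], rule sum_swap_inward)
  finally show ?thesis by (simp add: sum_distrib_left)
qed

lemma amult_assoc_iff_assoc_constants:
  assumes "finite J"
  shows "(\<forall>x\<in>vecs J. \<forall>y\<in>vecs J. \<forall>z\<in>vecs J. amult J M (amult J M x y) z = amult J M x (amult J M y z))
    \<longleftrightarrow> assoc_constants J M"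
proof
  assume assoc: "\<forall>x\<in>vecs J. \<forall>y\<in>vecs J. \<forall>z\<in>vecs J.
    amult J M (amult J M x y) z = amult J M x (amult J M y z)"
  show "assoc_constants J M"
    unfolding assoc_constants_def
  proof (intro ballI)
    fix a b c d assume "a \<in> J" "b \<in> J" "c \<in> J" "d \<in> J"
    then have "amult J M (amult J M (basis_vec a) (basis_vec b)) (basis_vec c) d
             = amult J M (basis_vec a) (amult J M (basis_vec b) (basis_vec c)) d"
      using assoc by (simp add: basis_vec_in_vecs)
    then show "(\<Sum>p\<in>J. M a b p * M p c d) = (\<Sum>p\<in>J. M b c p * M a p d)"
      using assms \<open>a \<in> J\<close> \<open>b \<in> J\<close> \<open>c \<in> J\<close> \<open>d \<in> J\<close>
      by (simp add: amult_basis_vec_left amult_basis_vec_right sum_basis_vec_mult basis_vec_in_vecs)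
  qed
next
  assume "assoc_constants J M"
  then have "amult J M (amult J M x y) z k = amult J M x (amult J M y z) k" for x y z k
    by (cases "k \<in> J") (simp_all add: amult_amult_left amult_amult_right amult_outside
        assoc_constants_def)
  then show "\<forall>x\<in>vecs J. \<forall>y\<in>vecs J. \<forall>z\<in>vecs J.
    amult J M (amult J M x y) z = amult J M x (amult J M y z)"
    by blast
qed

lemma amult_unit_iff_unit_constants:
  assumes "finite J"
  shows "(\<forall>x\<in>vecs J. amult J M u x = x \<and> amult J M x u = x) \<longleftrightarrow> unit_constants J M u"
proof
  assume unit: "\<forall>x\<in>vecs J. amult J M u x = x \<and> amult J M x u = x"
  show "unit_constants J M u"
    unfolding unit_constants_def
  proof (intro ballI conjI)
    fix j k assume "j \<in> J" "k \<in> J"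
    then have "amult J M u (basis_vec j) k = basis_vec j k" "amult J M (basis_vec j) u k = basis_vec j k"
      using unit by (simp_all add: basis_vec_in_vecs)
    then show "(\<Sum>i\<in>J. u i * M i j k) = basis_vec j k" "(\<Sum>i\<in>J. u i * M j i k) = basis_vec j k"
      using assms \<open>j \<in> J\<close> \<open>k \<in> J\<close> by (simp_all add: amult_basis_vec_left amult_basis_vec_right)
  qed
next
  assume unit: "unit_constants J M u"
  have "amult J M u x k = x k \<and> amult J M x u k = x k" if "x \<in> vecs J" for x k
  proof (cases "k \<in> J")
    case True
    then have "amult J M u x k = (\<Sum>j\<in>J. x j * basis_vec j k)"
      using unit by (simp add: amult_eq_sum_right unit_constants_def)
    moreover have "amult J M x u k = (\<Sum>j\<in>J. x j * basis_vec j k)"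
      using True unit by (simp add: amult_eq_sum_left unit_constants_def)
    moreover have "(\<Sum>j\<in>J. x j * basis_vec j k) = x k"
      using assms True by (simp add: basis_vec_def if_distrib[of "\<lambda>y. _ * y"] cong: if_cong)
    ultimately show ?thesis
      by simp
  qed (use that in \<open>simp add: amult_outside vecs_def\<close>)
  then show "\<forall>x\<in>vecs J. amult J M u x = x \<and> amult J M x u = x"
    by blast
qed

lemma fd_algebra_iff:
  "fd_algebra J M \<longleftrightarrow> finite J \<and> assoc_constants J M \<and> (\<exists>u. unit_constants J M u)"
proof -
  have "unit_constants J M (\<lambda>i. if i \<in> J then u i else 0) \<longleftrightarrow> unit_constants J M u" for u
    by (simp add: unit_constants_def cong: sum.cong)
  moreover have "(\<lambda>i. if i \<in> J then u i else 0) \<in> vecs J" for u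
    by (simp add: vecs_def)
  ultimately have units: "(\<exists>u\<in>vecs J. unit_constants J M u) \<longleftrightarrow> (\<exists>u. unit_constants J M u)"
    by blast
  show ?thesis
  proof (cases "finite J")
    case True
    then show ?thesis
      using amult_assoc_iff_assoc_constants[OF True, of M] amult_unit_iff_unit_constants[OF True, of M]
      by (simp add: fd_algebra_def units)
  qed (simp add: fd_algebra_def)
qed

section \<open>Nondegenerate bilinear forms\<close>

definition bilinear_form :: "'i set \<Rightarrow> ('i \<Rightarrow> 'i \<Rightarrow> rat) \<Rightarrow> ('i \<Rightarrow> rat) \<Rightarrow> ('i \<Rightarrow> rat) \<Rightarrow> rat" where
  "bilinear_form J \<beta> x y = (\<Sum>i\<in>J. \<Sum>j\<in>J. x i * y j * \<beta> i j)"

definition nondegenerate :: "'i set \<Rightarrow> ('i \<Rightarrow> 'i \<Rightarrow> rat) \<Rightarrow> bool" where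
  "nondegenerate J \<beta> \<longleftrightarrow>
     (\<forall>x\<in>vecs J. x \<noteq> (\<lambda>_. 0) \<longrightarrow> (\<exists>y\<in>vecs J. bilinear_form J \<beta> x y \<noteq> 0))"

definition trace_form :: "'i set \<Rightarrow> ('i \<Rightarrow> 'i \<Rightarrow> 'i \<Rightarrow> rat) \<Rightarrow> ('i \<Rightarrow> rat) \<Rightarrow> 'i \<Rightarrow> 'i \<Rightarrow> rat" where
  "trace_form J M t i j = (\<Sum>k\<in>J. M i j k * t k)"

lemma sum_amult_mult_trace:
  "(\<Sum>k\<in>J. amult J M x y k * t k) = bilinear_form J (trace_form J M t) x y"
proof -
  have "(\<Sum>k\<in>J. amult J M x y k * t k) = (\<Sum>k\<in>J. \<Sum>i\<in>J. \<Sum>j\<in>J. x i * y j * M i j k * t k)"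
    by (simp add: amult_def sum_distrib_right)
  also have "\<dots> = (\<Sum>i\<in>J. \<Sum>j\<in>J. \<Sum>k\<in>J. x i * y j * M i j k * t k)"
    by (rule sum_swap_inward)
  finally show ?thesis
    by (simp add: bilinear_form_def trace_form_def sum_distrib_left mult.assoc)
qed

lemma frobenius_iff_nondegenerate:
  "frobenius J M \<longleftrightarrow> fd_algebra J M \<and> (\<exists>t. nondegenerate J (trace_form J M t))"
  by (simp add: frobenius_def nondegenerate_def sum_amult_mult_trace)

lemma bilinear_form_cong:
  "(\<And>i. i \<in> J \<Longrightarrow> x i = x' i) \<Longrightarrow> (\<And>j. j \<in> J \<Longrightarrow> y j = y' j) \<Longrightarrow>
    bilinear_form J \<beta> x y = bilinear_form J \<beta> x' y'"
  by (simp add: bilinear_form_def)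

lemma nondegenerateI:
  assumes "\<And>x i. x \<in> vecs J \<Longrightarrow> i \<in> J \<Longrightarrow> x i \<noteq> 0 \<Longrightarrow> \<exists>y. bilinear_form J \<beta> x y \<noteq> 0"
  shows "nondegenerate J \<beta>"
  unfolding nondegenerate_def
proof (intro ballI impI)
  fix x assume x: "x \<in> vecs J" "x \<noteq> (\<lambda>_. 0)"
  then obtain i where "x i \<noteq> 0"
    by (meson ext)
  moreover have "i \<in> J"
    using x(1) calculation by (auto simp: vecs_def)
  ultimately obtain y where "bilinear_form J \<beta> x y \<noteq> 0"
    using assms x(1) by blast
  moreover have "(\<lambda>j. if j \<in> J then y j else 0) \<in> vecs J"
    by (simp add: vecs_def)
  moreover have "bilinear_form J \<beta> x (\<lambda>j. if j \<in> J then y j else 0) = bilinear_form J \<beta> x y"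
    by (rule bilinear_form_cong) simp_all
  ultimately show "\<exists>y\<in>vecs J. bilinear_form J \<beta> x y \<noteq> 0"
    by metis
qed

lemma nondegenerateD:
  assumes "nondegenerate J \<beta>" "i \<in> J" "x i \<noteq> 0"
  obtains y where "bilinear_form J \<beta> x y \<noteq> 0"
proof -
  let ?x = "\<lambda>i. if i \<in> J then x i else 0"
  have "?x \<in> vecs J" "?x \<noteq> (\<lambda>_. 0)"
    using assms(2,3) by (auto simp: vecs_def fun_eq_iff)
  then obtain y where "bilinear_form J \<beta> ?x y \<noteq> 0"
    using assms(1) unfolding nondegenerate_def by blast
  moreover have "bilinear_form J \<beta> ?x y = bilinear_form J \<beta> x y"
    by (rule bilinear_form_cong) simp_all
  ultimately show ?thesis
    using that by simp
qed

lemma bilinear_form_eq_sum: "bilinear_form J \<beta> x y = (\<Sum>i\<in>J. x i * (\<Sum>j\<in>J. y j * \<beta> i j))"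
  by (simp add: bilinear_form_def sum_distrib_left mult_ac)

lemma nondegenerate_reindex:
  assumes nd: "nondegenerate J \<beta>" and h1: "bij_betw h1 J J'" and h2: "bij_betw h2 J J'"
    and \<gamma>: "\<And>x y. x \<in> J \<Longrightarrow> y \<in> J \<Longrightarrow> \<gamma> (h1 x) (h2 y) = \<beta> x y"
  shows "nondegenerate J' \<gamma>"
proof (rule nondegenerateI)
  fix x :: "_ \<Rightarrow> rat" and i' assume "i' \<in> J'" "x i' \<noteq> 0"
  then obtain i where "i \<in> J" "x (h1 i) \<noteq> 0"
    using h1 by (auto simp: bij_betw_def)
  then obtain y where y: "bilinear_form J \<beta> (x \<circ> h1) y \<noteq> 0"
    using nondegenerateD[OF nd] by (metis comp_apply)
  let ?y = "y \<circ> inv_into J h2"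
  have "bilinear_form J' \<gamma> x ?y = (\<Sum>a\<in>J. x (h1 a) * (\<Sum>b\<in>J'. ?y b * \<gamma> (h1 a) b))"
    unfolding bilinear_form_eq_sum by (rule sum.reindex_bij_betw[OF h1, symmetric])
  also have "\<dots> = (\<Sum>a\<in>J. x (h1 a) * (\<Sum>b\<in>J. ?y (h2 b) * \<gamma> (h1 a) (h2 b)))"
    by (simp only: sum.reindex_bij_betw[OF h2, symmetric])
  also have "\<dots> = bilinear_form J \<beta> (x \<circ> h1) y"
    using h2 by (simp add: bilinear_form_eq_sum \<gamma> bij_betw_inv_into_left)
  finally show "\<exists>y. bilinear_form J' \<gamma> x y \<noteq> 0"
    using y by metis
qed

lemma nondegenerate_Times:
  assumes \<beta>: "nondegenerate I \<beta>" and \<gamma>: "nondegenerate P \<gamma>"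
  shows "nondegenerate (I \<times> P) (\<lambda>(i, f) (j, g). \<beta> i j * \<gamma> f g)"
proof (rule nondegenerateI)
  fix x :: "_ \<Rightarrow> rat" and q assume "q \<in> I \<times> P" "x q \<noteq> 0"
  then obtain i0 f0 where "i0 \<in> I" "f0 \<in> P" "x (i0, f0) \<noteq> 0"
    by auto
  then obtain c where c: "bilinear_form P \<gamma> (\<lambda>f. x (i0, f)) c \<noteq> 0"
    using nondegenerateD[OF \<gamma>] by metis
  define a where "a i = bilinear_form P \<gamma> (\<lambda>f. x (i, f)) c" for i
  obtain b where b: "bilinear_form I \<beta> a b \<noteq> 0"
    using nondegenerateD[OF \<beta> \<open>i0 \<in> I\<close>, of a] c by (auto simp: a_def)
  have "bilinear_form (I \<times> P) (\<lambda>(i, f) (j, g). \<beta> i j * \<gamma> f g) x (\<lambda>(j, g). b j * c g)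
      = (\<Sum>i\<in>I. \<Sum>f\<in>P. \<Sum>j\<in>I. \<Sum>g\<in>P. x (i, f) * c g * \<gamma> f g * (b j * \<beta> i j))"
    by (simp add: bilinear_form_def sum.cartesian_product' mult_ac)
  also have "\<dots> = (\<Sum>i\<in>I. \<Sum>j\<in>I. \<Sum>f\<in>P. \<Sum>g\<in>P. x (i, f) * c g * \<gamma> f g * (b j * \<beta> i j))"
    by (rule sum.cong[OF refl], rule sum.swap)
  also have "\<dots> = bilinear_form I \<beta> a b"
    by (simp add: bilinear_form_def a_def sum_distrib_left sum_distrib_right mult_ac)
  finally show "\<exists>y. bilinear_form (I \<times> P) (\<lambda>(i, f) (j, g). \<beta> i j * \<gamma> f g) x y \<noteq> 0"
    using b by metis
qed

definition tensor_form :: "'k set \<Rightarrow> ('i \<Rightarrow> 'i \<Rightarrow> rat) \<Rightarrow> ('k \<Rightarrow> 'i) \<Rightarrow> ('k \<Rightarrow> 'i) \<Rightarrow> rat" where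
  "tensor_form K \<beta> f g = (\<Prod>k\<in>K. \<beta> (f k) (g k))"

lemma tensor_form_insert:
  assumes "k \<notin> K" "finite K" "f \<in> K \<rightarrow>\<^sub>E I" "g \<in> K \<rightarrow>\<^sub>E I"
  shows "tensor_form (insert k K) \<beta> (f(k := i)) (g(k := j)) = \<beta> i j * tensor_form K \<beta> f g"
proof -
  have "(\<Prod>l\<in>K. \<beta> ((f(k := i)) l) ((g(k := j)) l)) = (\<Prod>l\<in>K. \<beta> (f l) (g l))"
    using assms(1) by (intro prod.cong) auto
  then show ?thesis
    using assms(1,2) by (simp add: tensor_form_def)
qed

lemma bij_betw_PiE_insert:
  "k \<notin> K \<Longrightarrow> bij_betw (\<lambda>(i, g). g(k := i)) (I \<times> (K \<rightarrow>\<^sub>E I)) (insert k K \<rightarrow>\<^sub>E I)"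
  using inj_combinator[of k K "\<lambda>_. I"] by (simp add: bij_betw_def PiE_insert_eq)

lemma nondegenerate_tensor_power:
  assumes "finite K" "nondegenerate I \<beta>"
  shows "nondegenerate (K \<rightarrow>\<^sub>E I) (tensor_form K \<beta>)"
  using assms(1)
proof (induction K rule: finite_induct)
  case empty
  show ?case
  proof (rule nondegenerateI)
    fix x :: "_ \<Rightarrow> rat" and f assume "f \<in> {} \<rightarrow>\<^sub>E I" "x f \<noteq> 0"
    then show "\<exists>y. bilinear_form ({} \<rightarrow>\<^sub>E I) (tensor_form {} \<beta>) x y \<noteq> 0"
      by (intro exI[of _ "\<lambda>_. 1"]) (simp add: bilinear_form_def tensor_form_def)
  qed
next
  case (insert k K)
  have "nondegenerate (I \<times> (K \<rightarrow>\<^sub>E I)) (\<lambda>(i, f) (j, g). \<beta> i j * tensor_form K \<beta> f g)"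
    using nondegenerate_Times[OF assms(2) insert.IH] .
  then show ?case
    by (rule nondegenerate_reindex[OF _ bij_betw_PiE_insert bij_betw_PiE_insert])
       (use insert.hyps in \<open>auto simp: tensor_form_insert\<close>)
qed

lemma nondegenerate_block:
  assumes "finite S" and \<sigma>: "\<And>w. w \<in> S \<Longrightarrow> \<sigma> w \<in> S"
    and \<psi>: "\<And>w. w \<in> S \<Longrightarrow> nondegenerate P (\<psi> w)"
    and \<beta>: "\<And>w w' f g. w \<in> S \<Longrightarrow> w' \<in> S \<Longrightarrow> f \<in> P \<Longrightarrow> g \<in> P \<Longrightarrow>
      \<beta> (f, w') (g, \<sigma> w) = (if w' = w then \<psi> w f g else 0)"
  shows "nondegenerate (P \<times> S) \<beta>"
proof (rule nondegenerateI)
  fix x :: "_ \<Rightarrow> rat" and q assume "q \<in> P \<times> S" "x q \<noteq> 0"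
  then obtain f0 w where w: "w \<in> S" and "f0 \<in> P" "x (f0, w) \<noteq> 0"
    by auto
  then obtain c where c: "bilinear_form P (\<psi> w) (\<lambda>f. x (f, w)) c \<noteq> 0"
    using nondegenerateD[OF \<psi>[OF w]] by metis
  let ?y = "\<lambda>(g, s). if s = \<sigma> w then c g else 0"
  have "(\<Sum>(g, s)\<in>P \<times> S. ?y (g, s) * \<beta> (f, w') (g, s)) = (if w' = w then \<Sum>g\<in>P. c g * \<psi> w f g else 0)"
    if "f \<in> P" "w' \<in> S" for f w'
  proof -
    have "(\<Sum>(g, s)\<in>P \<times> S. ?y (g, s) * \<beta> (f, w') (g, s)) = (\<Sum>g\<in>P. c g * \<beta> (f, w') (g, \<sigma> w))"
      using assms(1) \<sigma>[OF w]
      by (simp add: sum.cartesian_product' if_distrib[of "\<lambda>y. y * _"] cong: if_cong)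
    also have "\<dots> = (if w' = w then \<Sum>g\<in>P. c g * \<psi> w f g else 0)"
      using that w by (simp add: \<beta>)
    finally show ?thesis .
  qed
  then have "bilinear_form (P \<times> S) \<beta> x ?y
      = (\<Sum>f\<in>P. \<Sum>w'\<in>S. x (f, w') * (if w' = w then \<Sum>g\<in>P. c g * \<psi> w f g else 0))"
    by (simp add: bilinear_form_eq_sum sum.cartesian_product')
  also have "\<dots> = bilinear_form P (\<psi> w) (\<lambda>f. x (f, w)) c"
    using assms(1) w by (simp add: bilinear_form_eq_sum if_distrib[of "\<lambda>y. _ * y"] cong: if_cong)
  finally show "\<exists>y. bilinear_form (P \<times> S) \<beta> x y \<noteq> 0"
    using c by metis
qed

section \<open>Lengths of permutations\<close>

definition length_additive :: "nat \<Rightarrow> (nat \<Rightarrow> nat) \<Rightarrow> (nat \<Rightarrow> nat) \<Rightarrow> bool" where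
  "length_additive n v w \<longleftrightarrow> perm_length n (v \<circ> w) = perm_length n v + perm_length n w"

definition longest_perm :: "nat \<Rightarrow> nat \<Rightarrow> nat" where
  "longest_perm n = (\<lambda>k. if k < n then n - 1 - k else k)"

lemma finite_ordered_pairs_below: "finite {(i, j). i < j \<and> j < (n::nat) \<and> P i j}"
  by (rule finite_subset[of _ "{..<n} \<times> {..<n}"]) auto

lemma permutes_lessThan_less: "p permutes {..<n} \<Longrightarrow> i < n \<Longrightarrow> p i < n"
  using permutes_in_image by fastforce

lemma perm_length_id: "perm_length n id = 0"
proof -
  have "{(i, j). i < j \<and> j < n \<and> id j < id i} = {}"
    by auto
  then show ?thesis
    by (simp only: perm_length_def card.empty)
qed

lemma perm_length_comp_le:
  assumes b: "b permutes {..<n}"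
  shows "perm_length n (a \<circ> b) \<le> perm_length n a + perm_length n b"
proof -
  let ?inv = "\<lambda>w. {(i, j). i < j \<and> j < n \<and> w j < w i}"
  let ?X = "{(i, j). i < j \<and> j < n \<and> b i < b j \<and> a (b j) < a (b i)}"
  have "?inv (a \<circ> b) \<subseteq> ?inv b \<union> ?X"
    by (auto simp: linorder_not_less le_less inj_eq[OF permutes_inj[OF b]])
  then have "perm_length n (a \<circ> b) \<le> card (?inv b \<union> ?X)"
    unfolding perm_length_def by (intro card_mono) (simp_all add: finite_ordered_pairs_below)
  also have "\<dots> \<le> perm_length n b + card ?X"
    unfolding perm_length_def by (rule card_Un_le)
  also have "card ?X \<le> perm_length n a"
    unfolding perm_length_def
  proof (rule card_inj_on_le[where f="\<lambda>(i, j). (b i, b j)"])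
    show "inj_on (\<lambda>(i, j). (b i, b j)) ?X"
      by (auto simp: inj_on_def inj_eq[OF permutes_inj[OF b]])
    show "(\<lambda>(i, j). (b i, b j)) ` ?X \<subseteq> ?inv a"
      using permutes_lessThan_less[OF b] by auto
  qed (simp add: finite_ordered_pairs_below)
  finally show ?thesis
    by simp
qed

lemma perm_length_inv_le:
  assumes w: "w permutes {..<n}"
  shows "perm_length n (inv w) \<le> perm_length n w"
  unfolding perm_length_def
proof (rule card_inj_on_le[where f="\<lambda>(i, j). (inv w j, inv w i)"])
  have w': "inv w permutes {..<n}"
    using permutes_inv[OF w] .
  show "inj_on (\<lambda>(i, j). (inv w j, inv w i)) {(i, j). i < j \<and> j < n \<and> inv w j < inv w i}"
    by (auto simp: inj_on_def inj_eq[OF permutes_inj[OF w']])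
  show "(\<lambda>(i, j). (inv w j, inv w i)) ` {(i, j). i < j \<and> j < n \<and> inv w j < inv w i}
      \<subseteq> {(i, j). i < j \<and> j < n \<and> w j < w i}"
    using permutes_lessThan_less[OF w'] permutes_inverses[OF w] by auto
qed (simp add: finite_ordered_pairs_below)

lemma perm_length_inv:
  assumes "w permutes {..<n}"
  shows "perm_length n (inv w) = perm_length n w"
  using perm_length_inv_le[OF assms] perm_length_inv_le[OF permutes_inv[OF assms]]
  by (simp add: permutes_inv_inv[OF assms])

lemma longest_perm_permutes: "longest_perm n permutes {..<n}"
proof -
  have "bij_betw (longest_perm n) {..<n} {..<n}"
    by (rule bij_betw_byWitness[where f'="longest_perm n"]) (auto simp: longest_perm_def)
  then show ?thesis
    by (rule bij_imp_permutes) (simp add: longest_perm_def)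
qed

lemma perm_length_longest_perm_comp:
  assumes x: "x permutes {..<n}"
  shows "perm_length n (longest_perm n \<circ> x) + perm_length n x = card {(i, j). i < j \<and> j < n}"
proof -
  let ?up = "{(i, j). i < j \<and> j < n \<and> x i < x j}" and ?down = "{(i, j). i < j \<and> j < n \<and> x j < x i}"
  have "longest_perm n (x j) < longest_perm n (x i) \<longleftrightarrow> x i < x j" if "i < j" "j < n" for i j
  proof -
    have "x i < n" "x j < n"
      using that permutes_lessThan_less[OF x] by simp_all
    then show ?thesis
      unfolding longest_perm_def by simp linarith
  qed
  then have "perm_length n (longest_perm n \<circ> x) = card ?up"
    unfolding perm_length_def by (intro arg_cong[where f=card]) auto
  moreover have "{(i, j). i < j \<and> j < n} = ?up \<union> ?down"
    by (auto simp: inj_eq[OF permutes_inj[OF x]] not_less_iff_gr_or_eq)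
  moreover have "card (?up \<union> ?down) = card ?up + card ?down"
    by (rule card_Un_disjoint) (auto simp: finite_ordered_pairs_below)
  ultimately show ?thesis
    by (simp add: perm_length_def)
qed

lemma length_additive_longest_perm:
  assumes w: "w permutes {..<n}"
  shows "length_additive n (longest_perm n \<circ> inv w) w"
proof -
  have "longest_perm n \<circ> inv w \<circ> w = longest_perm n"
    by (simp add: o_assoc[symmetric] permutes_inv_o(2)[OF w])
  then show ?thesis
    using perm_length_longest_perm_comp[OF permutes_inv[OF w]]
      perm_length_longest_perm_comp[OF permutes_id, of n]
    by (simp add: length_additive_def perm_length_inv[OF w] perm_length_id)
qed

lemma longest_perm_factor_iff:
  assumes w: "w permutes {..<n}"
  shows "longest_perm n = longest_perm n \<circ> inv w \<circ> w' \<and> length_additive n (longest_perm n \<circ> inv w) w'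
    \<longleftrightarrow> w' = w"
proof
  assume "longest_perm n = longest_perm n \<circ> inv w \<circ> w' \<and> length_additive n (longest_perm n \<circ> inv w) w'"
  then have "longest_perm n \<circ> (inv w \<circ> w') = longest_perm n \<circ> id"
    by (simp add: o_assoc)
  then have "inv w \<circ> w' = id"
    by (simp add: fun_eq_iff inj_eq[OF permutes_inj[OF longest_perm_permutes]])
  then have "w \<circ> (inv w \<circ> w') = w"
    by simp
  then show "w' = w"
    by (simp add: o_assoc permutes_inv_o(1)[OF w])
next
  assume "w' = w"
  then show "longest_perm n = longest_perm n \<circ> inv w \<circ> w' \<and> length_additive n (longest_perm n \<circ> inv w) w'"
    using length_additive_longest_perm[OF w]
    by (simp add: o_assoc[symmetric] permutes_inv_o(2)[OF w])
qed

lemma length_additive_assoc: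
  assumes "v permutes {..<n}" "w permutes {..<n}"
  shows "length_additive n v w \<and> length_additive n u (v \<circ> w)
    \<longleftrightarrow> length_additive n u v \<and> length_additive n (u \<circ> v) w"
  using perm_length_comp_le[of w n v] perm_length_comp_le[of "v \<circ> w" n u]
    perm_length_comp_le[of w n "u \<circ> v"] perm_length_comp_le[of v n u]
    permutes_compose[OF assms(2,1)] assms
  by (auto simp: length_additive_def o_assoc)

section \<open>Tensor powers\<close>

definition tensor_mult :: "'k set \<Rightarrow> ('i \<Rightarrow> 'i \<Rightarrow> 'i \<Rightarrow> rat) \<Rightarrow> ('k \<Rightarrow> 'i) \<Rightarrow> ('k \<Rightarrow> 'i) \<Rightarrow> ('k \<Rightarrow> 'i) \<Rightarrow> rat" where
  "tensor_mult K m f g h = (\<Prod>k\<in>K. m (f k) (g k) (h k))"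

lemma tensor_mult_restrict [simp]:
  "tensor_mult K m f (restrict g K) h = tensor_mult K m f g h"
  "tensor_mult K m f g (restrict h K) = tensor_mult K m f g h"
  by (simp_all add: tensor_mult_def)

lemma tensor_mult_permute:
  assumes "w permutes K"
  shows "tensor_mult K m (f \<circ> w) (g \<circ> w) (h \<circ> w) = tensor_mult K m f g h"
  by (simp add: tensor_mult_def prod.permute[OF assms, of "\<lambda>k. m (f k) (g k) (h k)"] comp_def)

lemma sum_PiE_prod_mult:
  assumes "finite K" "finite I"
  shows "(\<Sum>q\<in>K \<rightarrow>\<^sub>E I. (\<Prod>k\<in>K. F k (q k)) * (\<Prod>k\<in>K. G k (q k)))
    = (\<Prod>k\<in>K. \<Sum>i\<in>I. F k i * G k i :: rat)"
  by (subst prod_sum_PiE[OF assms(1)]) (simp_all add: assms(2) prod.distrib)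

lemma PiE_comp_permutes: "h \<in> K \<rightarrow>\<^sub>E I \<Longrightarrow> v permutes K \<Longrightarrow> h \<circ> v \<in> K \<rightarrow> I"
  using permutes_in_image by fastforce

lemma bij_betw_PiE_permute:
  assumes w: "w permutes K"
  shows "bij_betw (\<lambda>g. restrict (g \<circ> w) K) (K \<rightarrow>\<^sub>E I) (K \<rightarrow>\<^sub>E I)"
proof (rule bij_betw_byWitness[where f'="\<lambda>g. restrict (g \<circ> inv w) K"])
  have w': "inv w permutes K"
    using permutes_inv[OF w] .
  show "\<forall>g\<in>K \<rightarrow>\<^sub>E I. restrict (restrict (g \<circ> w) K \<circ> inv w) K = g"
    using permutes_in_image[OF w'] permutes_inverses[OF w]
    by (auto simp: fun_eq_iff PiE_iff extensional_def)
  show "\<forall>g\<in>K \<rightarrow>\<^sub>E I. restrict (restrict (g \<circ> inv w) K \<circ> w) K = g"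
    using permutes_in_image[OF w] permutes_inverses[OF w]
    by (auto simp: fun_eq_iff PiE_iff extensional_def)
  show "(\<lambda>g. restrict (g \<circ> w) K) ` (K \<rightarrow>\<^sub>E I) \<subseteq> K \<rightarrow>\<^sub>E I"
    using permutes_in_image[OF w] by auto
  show "(\<lambda>g. restrict (g \<circ> inv w) K) ` (K \<rightarrow>\<^sub>E I) \<subseteq> K \<rightarrow>\<^sub>E I"
    using permutes_in_image[OF w'] by auto
qed

lemma tensor_mult_assoc:
  assumes "finite K" "finite I" and assoc: "assoc_constants I m"
    and "a \<in> K \<rightarrow> I" "b \<in> K \<rightarrow> I" "c \<in> K \<rightarrow> I" "d \<in> K \<rightarrow> I"
  shows "(\<Sum>q\<in>K \<rightarrow>\<^sub>E I. tensor_mult K m a b q * tensor_mult K m q c d)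
    = (\<Sum>q\<in>K \<rightarrow>\<^sub>E I. tensor_mult K m b c q * tensor_mult K m a q d)"
proof -
  have "(\<Sum>i\<in>I. m (a k) (b k) i * m i (c k) (d k)) = (\<Sum>i\<in>I. m (b k) (c k) i * m (a k) i (d k))"
    if "k \<in> K" for k
    using assoc assms(4-7) that by (simp add: assoc_constants_def Pi_iff)
  then have "(\<Prod>k\<in>K. \<Sum>i\<in>I. m (a k) (b k) i * m i (c k) (d k))
      = (\<Prod>k\<in>K. \<Sum>i\<in>I. m (b k) (c k) i * m (a k) i (d k))"
    by (rule prod.cong[OF refl])
  then show ?thesis
    unfolding tensor_mult_def
    by (simp only: sum_PiE_prod_mult[OF assms(1,2), of "\<lambda>k i. m (a k) (b k) i" "\<lambda>k i. m i (c k) (d k)"]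
        sum_PiE_prod_mult[OF assms(1,2), of "\<lambda>k i. m (b k) (c k) i" "\<lambda>k i. m (a k) i (d k)"])
qed

lemma tensor_mult_assoc_permute:
  assumes "finite K" "finite I" "assoc_constants I m" "w permutes K"
    and abcd: "a \<in> K \<rightarrow> I" "b \<in> K \<rightarrow> I" "c \<in> K \<rightarrow> I" "d \<in> K \<rightarrow> I"
  shows "(\<Sum>q\<in>K \<rightarrow>\<^sub>E I. tensor_mult K m b c q * tensor_mult K m a (q \<circ> w) d)
    = (\<Sum>q\<in>K \<rightarrow>\<^sub>E I. tensor_mult K m a (b \<circ> w) q * tensor_mult K m q (c \<circ> w) d)"
proof -
  have "(\<Sum>q\<in>K \<rightarrow>\<^sub>E I. tensor_mult K m b c q * tensor_mult K m a (q \<circ> w) d)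
      = (\<Sum>q\<in>K \<rightarrow>\<^sub>E I. tensor_mult K m (b \<circ> w) (c \<circ> w) (restrict (q \<circ> w) K)
           * tensor_mult K m a (restrict (q \<circ> w) K) d)"
    by (simp add: tensor_mult_permute[OF assms(4)])
  also have "\<dots> = (\<Sum>q\<in>K \<rightarrow>\<^sub>E I. tensor_mult K m (b \<circ> w) (c \<circ> w) q * tensor_mult K m a q d)"
    by (rule sum.reindex_bij_betw[OF bij_betw_PiE_permute[OF assms(4)]])
  also have "\<dots> = (\<Sum>q\<in>K \<rightarrow>\<^sub>E I. tensor_mult K m a (b \<circ> w) q * tensor_mult K m q (c \<circ> w) d)"
    using abcd permutes_in_image[OF assms(4)]
    by (intro tensor_mult_assoc[symmetric] assms(1-3)) auto
  finally show ?thesis .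
qed

lemma prod_basis_vec_PiE:
  assumes "finite K" "g \<in> K \<rightarrow>\<^sub>E I" "h \<in> K \<rightarrow>\<^sub>E I"
  shows "(\<Prod>k\<in>K. basis_vec (g k) (h k)) = basis_vec g h"
proof (cases "g = h")
  case False
  then obtain k where "k \<in> K" "g k \<noteq> h k"
    using PiE_ext[OF assms(2,3)] by blast
  then have "k \<in> K" "basis_vec (g k) (h k) = 0"
    by (simp_all add: basis_vec_def)
  then have "(\<Prod>k\<in>K. basis_vec (g k) (h k)) = 0"
    using assms(1) by (intro prod_zero) auto
  then show ?thesis
    using False by (simp add: basis_vec_def)
qed (simp add: basis_vec_def)

lemma tensor_mult_unit:
  assumes "finite K" "finite I" and unit: "unit_constants I m u"
    and gh: "g \<in> K \<rightarrow>\<^sub>E I" "h \<in> K \<rightarrow>\<^sub>E I"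
  shows "(\<Sum>f\<in>K \<rightarrow>\<^sub>E I. (\<Prod>k\<in>K. u (f k)) * tensor_mult K m f g h) = basis_vec g h"
    and "(\<Sum>f\<in>K \<rightarrow>\<^sub>E I. (\<Prod>k\<in>K. u (f k)) * tensor_mult K m g f h) = basis_vec g h"
proof -
  have "(\<Sum>i\<in>I. u i * m i (g k) (h k)) = basis_vec (g k) (h k)"
    and "(\<Sum>i\<in>I. u i * m (g k) i (h k)) = basis_vec (g k) (h k)" if "k \<in> K" for k
    using unit gh that by (auto simp: unit_constants_def)
  then show "(\<Sum>f\<in>K \<rightarrow>\<^sub>E I. (\<Prod>k\<in>K. u (f k)) * tensor_mult K m f g h) = basis_vec g h"
    and "(\<Sum>f\<in>K \<rightarrow>\<^sub>E I. (\<Prod>k\<in>K. u (f k)) * tensor_mult K m g f h) = basis_vec g h"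
    unfolding tensor_mult_def
    by (simp_all only: sum_PiE_prod_mult[OF assms(1,2), of "\<lambda>k. u" "\<lambda>k i. m i (g k) (h k)"]
        sum_PiE_prod_mult[OF assms(1,2), of "\<lambda>k. u" "\<lambda>k i. m (g k) i (h k)"]
        prod_basis_vec_PiE[OF assms(1) gh] cong: prod.cong)
qed

lemma tensor_mult_unit_permute:
  assumes "finite K" "finite I" "unit_constants I m u" "v permutes K"
    and gh: "g \<in> K \<rightarrow>\<^sub>E I" "h \<in> K \<rightarrow>\<^sub>E I"
  shows "(\<Sum>f\<in>K \<rightarrow>\<^sub>E I. (\<Prod>k\<in>K. u (f k)) * tensor_mult K m g (f \<circ> v) h) = basis_vec g h"
proof -
  have "(\<Prod>k\<in>K. u (f k)) = (\<Prod>k\<in>K. u (restrict (f \<circ> v) K k))" for f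
    using prod.permute[OF assms(4), of "\<lambda>k. u (f k)"] by simp
  then have "(\<Sum>f\<in>K \<rightarrow>\<^sub>E I. (\<Prod>k\<in>K. u (f k)) * tensor_mult K m g (f \<circ> v) h)
      = (\<Sum>f\<in>K \<rightarrow>\<^sub>E I. (\<Prod>k\<in>K. u (restrict (f \<circ> v) K k)) * tensor_mult K m g (restrict (f \<circ> v) K) h)"
    by simp
  also have "\<dots> = (\<Sum>f\<in>K \<rightarrow>\<^sub>E I. (\<Prod>k\<in>K. u (f k)) * tensor_mult K m g f h)"
    by (rule sum.reindex_bij_betw[OF bij_betw_PiE_permute[OF assms(4)],
          of "\<lambda>f. (\<Prod>k\<in>K. u (f k)) * tensor_mult K m g f h"])
  also have "\<dots> = basis_vec g h"
    by (rule tensor_mult_unit(2)[OF assms(1-3) gh])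
  finally show ?thesis .
qed

section \<open>The algebra A_n(B)\<close>

lemma AnB_basis_eq: "AnB_basis I n = ({..<n} \<rightarrow>\<^sub>E I) \<times> {w. w permutes {..<n}}"
  by (auto simp: AnB_basis_def)

lemma finite_AnB_basis: "finite I \<Longrightarrow> finite (AnB_basis I n)"
  by (simp add: AnB_basis_eq finite_PiE finite_permutations)

lemma sum_AnB_basis:
  "(\<Sum>p\<in>AnB_basis I n. F p) = (\<Sum>f\<in>{..<n} \<rightarrow>\<^sub>E I. \<Sum>w\<in>{w. w permutes {..<n}}. F (f, w))"
  by (simp add: AnB_basis_eq sum.cartesian_product')

lemma AnB_mult_eq:
  "AnB_mult I m n (f, w) (g, v) (h, u)
    = (if u = v \<circ> w \<and> length_additive n v w then tensor_mult {..<n} m f (g \<circ> w) h else 0)"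
  by (auto simp: AnB_mult_def length_additive_def tensor_mult_def)

lemma sum_AnB_mult_mult_left:
  assumes "v \<circ> w permutes {..<n}"
  shows "(\<Sum>p\<in>AnB_basis I n. AnB_mult I m n (f, w) (g, v) p * AnB_mult I m n p (h, u) (e, z))
    = (if z = u \<circ> v \<circ> w \<and> length_additive n v w \<and> length_additive n u (v \<circ> w)
       then \<Sum>q\<in>{..<n} \<rightarrow>\<^sub>E I. tensor_mult {..<n} m f (g \<circ> w) q * tensor_mult {..<n} m q (h \<circ> v \<circ> w) e
       else 0)"
  using assms
  by (cases "length_additive n v w"; cases "z = u \<circ> v \<circ> w"; cases "length_additive n u (v \<circ> w)")
     (simp_all add: sum_AnB_basis AnB_mult_eq finite_permutations if_distrib[of "\<lambda>x. x * _"] o_assoc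
      cong: if_cong)

lemma sum_AnB_mult_mult_right:
  assumes "u \<circ> v permutes {..<n}"
  shows "(\<Sum>p\<in>AnB_basis I n. AnB_mult I m n (g, v) (h, u) p * AnB_mult I m n (f, w) p (e, z))
    = (if z = u \<circ> v \<circ> w \<and> length_additive n u v \<and> length_additive n (u \<circ> v) w
       then \<Sum>q\<in>{..<n} \<rightarrow>\<^sub>E I. tensor_mult {..<n} m g (h \<circ> v) q * tensor_mult {..<n} m f (q \<circ> w) e
       else 0)"
  using assms
  by (cases "length_additive n u v"; cases "z = u \<circ> v \<circ> w"; cases "length_additive n (u \<circ> v) w")
     (simp_all add: sum_AnB_basis AnB_mult_eq finite_permutations if_distrib[of "\<lambda>x. x * _"] o_assoc
      cong: if_cong)

lemma assoc_constants_AnB: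
  assumes "finite I" "assoc_constants I m"
  shows "assoc_constants (AnB_basis I n) (AnB_mult I m n)"
  unfolding assoc_constants_def AnB_basis_eq split_paired_Ball_Sigma
proof (intro ballI)
  fix f g h e w v u z
  assume fghe: "f \<in> {..<n} \<rightarrow>\<^sub>E I" "g \<in> {..<n} \<rightarrow>\<^sub>E I" "h \<in> {..<n} \<rightarrow>\<^sub>E I" "e \<in> {..<n} \<rightarrow>\<^sub>E I"
    and perms: "w \<in> {w. w permutes {..<n}}" "v \<in> {w. w permutes {..<n}}" "u \<in> {w. w permutes {..<n}}"
  then have w: "w permutes {..<n}" and v: "v permutes {..<n}" and u: "u permutes {..<n}"
    by simp_all
  have "(\<Sum>q\<in>{..<n} \<rightarrow>\<^sub>E I. tensor_mult {..<n} m g (h \<circ> v) q * tensor_mult {..<n} m f (q \<circ> w) e)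
      = (\<Sum>q\<in>{..<n} \<rightarrow>\<^sub>E I. tensor_mult {..<n} m f (g \<circ> w) q * tensor_mult {..<n} m q (h \<circ> v \<circ> w) e)"
    using fghe PiE_comp_permutes[OF fghe(3) v]
    by (intro tensor_mult_assoc_permute[OF finite_lessThan assms w]) (auto simp: PiE_iff)
  then show "(\<Sum>p\<in>({..<n} \<rightarrow>\<^sub>E I) \<times> {w. w permutes {..<n}}.
        AnB_mult I m n (f, w) (g, v) p * AnB_mult I m n p (h, u) (e, z))
      = (\<Sum>p\<in>({..<n} \<rightarrow>\<^sub>E I) \<times> {w. w permutes {..<n}}.
        AnB_mult I m n (g, v) (h, u) p * AnB_mult I m n (f, w) p (e, z))"
    using length_additive_assoc[OF v w, of u]
    by (simp only: AnB_basis_eq[symmetric] sum_AnB_mult_mult_left[OF permutes_compose[OF w v]]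
        sum_AnB_mult_mult_right[OF permutes_compose[OF v u]])
qed

definition AnB_unit :: "nat \<Rightarrow> ('i \<Rightarrow> rat) \<Rightarrow> (nat \<Rightarrow> 'i) \<times> (nat \<Rightarrow> nat) \<Rightarrow> rat" where
  "AnB_unit n u = (\<lambda>(f, w). if w = id then \<Prod>k<n. u (f k) else 0)"

lemma sum_AnB_unit_mult:
  "(\<Sum>p\<in>AnB_basis I n. AnB_unit n u p * F p) = (\<Sum>f\<in>{..<n} \<rightarrow>\<^sub>E I. (\<Prod>k<n. u (f k)) * F (f, id))"
  by (simp add: sum_AnB_basis AnB_unit_def finite_permutations if_distrib[of "\<lambda>x. x * _"] cong: if_cong)

lemma unit_constants_AnB:
  assumes "finite I" "unit_constants I m u"
  shows "unit_constants (AnB_basis I n) (AnB_mult I m n) (AnB_unit n u)"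
  unfolding unit_constants_def
proof (intro ballI conjI)
  fix p q assume "p \<in> AnB_basis I n" "q \<in> AnB_basis I n"
  then obtain g v h z where pq: "p = (g, v)" "q = (h, z)" and gh: "g \<in> {..<n} \<rightarrow>\<^sub>E I" "h \<in> {..<n} \<rightarrow>\<^sub>E I"
    and v: "v permutes {..<n}"
    by (auto simp: AnB_basis_def)
  have "basis_vec p q = (if z = v then basis_vec g h else 0)"
    by (auto simp: pq basis_vec_def)
  then show "(\<Sum>i\<in>AnB_basis I n. AnB_unit n u i * AnB_mult I m n i p q) = basis_vec p q"
    and "(\<Sum>i\<in>AnB_basis I n. AnB_unit n u i * AnB_mult I m n p i q) = basis_vec p q"
    using tensor_mult_unit(1)[OF finite_lessThan assms gh] tensor_mult_unit_permute[OF finite_lessThan assms v gh]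
    by (cases "z = v"; simp add: pq sum_AnB_unit_mult AnB_mult_eq length_additive_def perm_length_id)+
qed

lemma fd_algebra_AnB:
  assumes "fd_algebra I m"
  shows "fd_algebra (AnB_basis I n) (AnB_mult I m n)"
proof -
  have fin: "finite I" and assoc: "assoc_constants I m" and "\<exists>u. unit_constants I m u"
    using assms by (simp_all add: fd_algebra_iff)
  then obtain u where "unit_constants I m u"
    by blast
  then show ?thesis
    unfolding fd_algebra_iff
    using finite_AnB_basis[OF fin] assoc_constants_AnB[OF fin assoc] unit_constants_AnB[OF fin] by blast
qed

definition AnB_trace :: "nat \<Rightarrow> ('i \<Rightarrow> rat) \<Rightarrow> (nat \<Rightarrow> 'i) \<times> (nat \<Rightarrow> nat) \<Rightarrow> rat" where
  "AnB_trace n t = (\<lambda>(f, w). if w = longest_perm n then \<Prod>k<n. t (f k) else 0)"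

lemma trace_form_AnB:
  assumes "finite I"
  shows "trace_form (AnB_basis I n) (AnB_mult I m n) (AnB_trace n t) (f, w) (g, v)
    = (if longest_perm n = v \<circ> w \<and> length_additive n v w
       then tensor_form {..<n} (trace_form I m t) f (g \<circ> w) else 0)"
proof -
  have "trace_form (AnB_basis I n) (AnB_mult I m n) (AnB_trace n t) (f, w) (g, v)
      = (\<Sum>h\<in>{..<n} \<rightarrow>\<^sub>E I. AnB_mult I m n (f, w) (g, v) (h, longest_perm n) * (\<Prod>k<n. t (h k)))"
    by (simp add: trace_form_def sum_AnB_basis AnB_trace_def finite_permutations longest_perm_permutes
        if_distrib[of "\<lambda>x. _ * x"] cong: if_cong)
  moreover have "(\<Sum>h\<in>{..<n} \<rightarrow>\<^sub>E I. tensor_mult {..<n} m f (g \<circ> w) h * (\<Prod>k<n. t (h k)))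
      = tensor_form {..<n} (trace_form I m t) f (g \<circ> w)"
    unfolding tensor_mult_def tensor_form_def trace_form_def
    by (rule sum_PiE_prod_mult[OF finite_lessThan assms, where F="\<lambda>k i. m (f k) ((g \<circ> w) k) i"
          and G="\<lambda>k. t"])
  ultimately show ?thesis
    by (cases "longest_perm n = v \<circ> w"; cases "length_additive n v w") (simp_all add: AnB_mult_eq)
qed

lemma nondegenerate_tensor_form_permute:
  assumes "finite K" "nondegenerate I \<beta>" and w: "w permutes K"
  shows "nondegenerate (K \<rightarrow>\<^sub>E I) (\<lambda>f g. tensor_form K \<beta> f (g \<circ> w))"
proof (rule nondegenerate_reindex[OF nondegenerate_tensor_power[OF assms(1,2)] bij_betw_id
      bij_betw_PiE_permute[OF permutes_inv[OF w]]])
  fix f g assume "f \<in> K \<rightarrow>\<^sub>E I" "g \<in> K \<rightarrow>\<^sub>E I"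
  show "tensor_form K \<beta> (id f) (restrict (g \<circ> inv w) K \<circ> w) = tensor_form K \<beta> f g"
    using permutes_in_image[OF w] permutes_inverses(2)[OF w] by (simp add: tensor_form_def)
qed

lemma nondegenerate_AnB_trace_form:
  assumes "finite I" "nondegenerate I (trace_form I m t)"
  shows "nondegenerate (AnB_basis I n) (trace_form (AnB_basis I n) (AnB_mult I m n) (AnB_trace n t))"
proof -
  have "nondegenerate (({..<n} \<rightarrow>\<^sub>E I) \<times> {w. w permutes {..<n}})
      (trace_form (AnB_basis I n) (AnB_mult I m n) (AnB_trace n t))"
  proof (rule nondegenerate_block[where \<sigma>="\<lambda>w. longest_perm n \<circ> inv w"])
    show "finite {w. w permutes {..<n}}"
      by (simp add: finite_permutations)
    show "longest_perm n \<circ> inv w \<in> {w. w permutes {..<n}}" if "w \<in> {w. w permutes {..<n}}" for w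
      using that by (simp add: permutes_compose permutes_inv longest_perm_permutes)
    show "nondegenerate ({..<n} \<rightarrow>\<^sub>E I) (\<lambda>f g. tensor_form {..<n} (trace_form I m t) f (g \<circ> w))"
      if "w \<in> {w. w permutes {..<n}}" for w
      using that by (simp add: nondegenerate_tensor_form_permute assms(2))
    show "trace_form (AnB_basis I n) (AnB_mult I m n) (AnB_trace n t) (f, w') (g, longest_perm n \<circ> inv w)
        = (if w' = w then tensor_form {..<n} (trace_form I m t) f (g \<circ> w) else 0)"
      if "w \<in> {w. w permutes {..<n}}" for w w' f g
      using that by (simp add: trace_form_AnB[OF assms(1)] longest_perm_factor_iff)
  qed
  then show ?thesis
    by (simp only: AnB_basis_eq[symmetric])
qed

theorem mainTheorem17:
  fixes I :: "'i set" and m :: "'i \<Rightarrow> 'i \<Rightarrow> 'i \<Rightarrow> rat" and n :: nat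
  assumes "frobenius I m"
  shows "frobenius (AnB_basis I n) (AnB_mult I m n)"
proof -
  obtain t where fd: "fd_algebra I m" and nd: "nondegenerate I (trace_form I m t)"
    using assms by (auto simp: frobenius_iff_nondegenerate)
  have "finite I"
    using fd by (simp add: fd_algebra_def)
  then show ?thesis
    unfolding frobenius_iff_nondegenerate
    using fd_algebra_AnB[OF fd] nondegenerate_AnB_trace_form[OF _ nd] by blast
qed

end
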